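(* Consider problem (PI): minimize $f(x)$ subject to $x\in X$, $g_i(x)\le 0$, $i=1,\dots,m$, where $\Gamma\subseteq\mathbb R^n$ is an open convex set and $X\subseteq\Gamma$ is convex. Let $\bar S$ be its solution set and $\bar x\in\bar S$. Assume $f:\Gamma\to\mathbb R$ is continuously differentiable and quasiconvex on $\Gamma$, $g_i$ for $i\in I(\bar x)$ are differentiable and quasiconvex on $\Gamma$, $g_i$ for $i\notin I(\bar x)$ are continuous at $\bar x$, $\nabla f(\bar x)\ne 0$, GMFCQ holds at $\bar x$, and $\lambda$ is a (fixed) KKT multiplier at $\bar x$. Define \[ \begin{aligned} S_1'(\lambda)&:=\{x\in X_1(\lambda)\mid \nabla f(x)^T(\bar x-x)=0,\ \nabla f(x)\ne0\},\\ S_2'(\lambda)&:=\{x\in X_1(\lambda)\mid \nabla f(x)^T(\bar x-x)\ge0,\ \nabla f(x)\ne0\},\\ S_3'(\lambda)&:=\{x\in X_1(\lambda)\mid \nabla f(x)^T(\bar x-x)=\nabla f(\bar x)^T(x-\bar x),\ \nabla f(x)\ne0\},\\ S_4'(\lambda)&:=\{x\in X_1(\lambda)\mid \nabla f(x)^T(\bar x-x)\ge\nabla f(\bar x)^T(x-\bar x),\ \nabla f(x)\ne0\},\\ S_5'(\lambda)&:=\{x\in X_1(\lambda)\mid \nabla f(x)^T(\bar x-x)=\nabla f(\bar x)^T(x-\bar x)=0,\ \nabla f(x)\ne0\}. \end{aligned} \] Then $\bar S=S_1'(\lambda)=S_2'(\lambda)=S_3'(\lambda)=S_4'(\lambda)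=S_5'(\lambda)$.
   Context: Quasiconvexity on $\Gamma$: $f(x+t(y-x))\le\max\{f(x),f(y)\}$ for all $x,y\in\Gamma$, $t\in[0,1]$. Feasible set $S:=\{x\in X\mid g_i(x)\le0,\ i=1,\dots,m\}$; $\bar S$ the set of global minimizers of $f$ on $S$. Active index set $I(x):=\{i\mid g_i(x)=0\}$. For a cone $C$, its negative polar is $C^*:=\{x\in\mathbb R^n\mid c^Tx\le 0\ \forall c\in C\}$; $T_X(x)$ is the tangent cone of $X$ at $x$ and $N_X(x):=(T_X(x))^*$ is the normal cone. GMFCQ holds at $\bar x$ iff there is $y\in (N_X(\bar x))^*$ with $\nabla g_i(\bar x)^Ty<0$ for all $i\in I(\bar x)$. A KKT multiplier at $\bar x$ is $\lambda\in\mathbb R^m$ with $\lambda_i\ge0$ for all $i$, $\lambda_ig_i(\bar x)=0$ for all $i$, and $\big[\nabla f(\bar x)+\sum_{i\in I(\bar x)}\lambda_i\nabla g_i(\bar x)\big]^T(x-\bar x)\ge0$ for all $x\in X$. Define $\tilde I(\bar x,\lambda):=\{i\mid g_i(\bar x)=0,\ \lambda_i>0\}$ and $X_1(\lambda):=\{x\in X\mid g_i(x)=0\ \forall i\in\tilde I(\bar x,\lambda),\ g_i(x)\le0\ \forall i\notin\tilde I(\bar x,\lambda)\}$. *)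

theory Defs
  imports "HOL-Analysis.Analysis"
begin

definition quasiconvex_on :: "'a::real_vector set \<Rightarrow> ('a \<Rightarrow> real) \<Rightarrow> bool" where
  "quasiconvex_on \<Gamma> f \<longleftrightarrow>
     (\<forall>x\<in>\<Gamma>. \<forall>y\<in>\<Gamma>. \<forall>t::real. 0 \<le> t \<and> t \<le> 1 \<longrightarrow> f (x + t *\<^sub>R (y - x)) \<le> max (f x) (f y))"

definition neg_polar :: "'a::real_inner set \<Rightarrow> 'a set" where
  "neg_polar C = {x. \<forall>c\<in>C. inner c x \<le> 0}"

definition tangent_cone :: "'a::real_normed_vector set \<Rightarrow> 'a \<Rightarrow> 'a set" where
  "tangent_cone X x = {d. \<exists>t :: nat \<Rightarrow> real. \<exists>dd :: nat \<Rightarrow> 'a.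
      (\<forall>k. 0 < t k) \<and> t \<longlonglongrightarrow> 0 \<and> dd \<longlonglongrightarrow> d \<and> (\<forall>k. x + t k *\<^sub>R dd k \<in> X)}"

definition normal_cone :: "'a::real_inner set \<Rightarrow> 'a \<Rightarrow> 'a set" where
  "normal_cone X x = neg_polar (tangent_cone X x)"

end

theory Submission
  imports Defs
begin

text \<open>
  For a differentiable quasiconvex function h, h b \<le> h a forces
  \<open>\<nabla>h(a)\<cdot>(b - a) \<le> 0\<close>, and the inequality is strict when h b < h a and
  \<open>\<nabla>h(a) \<noteq> 0\<close> (perturb b in the direction \<open>\<nabla>h(a)\<close>).
  Applied to the active constraints, the KKT inequality gives \<open>\<nabla>f(xbar)\<cdot>(x - xbar) \<ge> 0\<close>
  on the feasible set, with equality and vanishing multiplier terms at every solution x;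
  the strict version then forces \<open>g\<^sub>i(x) = 0\<close> for all i with \<open>\<lambda>\<^sub>i > 0\<close>, so solutions lie in X1.
  At a solution x, f is constant on the segment [xbar, x], hence \<open>\<nabla>f(x)\<cdot>(xbar - x) = 0\<close>;
  and \<open>\<nabla>f(x) \<noteq> 0\<close>, since otherwise \<open>\<nabla>f\<close> would vanish at every point of the segment
  and, by continuity, at xbar. Conversely, a point of X1 with \<open>\<nabla>f(x) \<noteq> 0\<close> and
  \<open>\<nabla>f(x)\<cdot>(xbar - x) \<ge> 0\<close> cannot have f x > f xbar by the strict inequality.
\<close>

lemma gderiv_along_line:
  fixes f :: "'a::real_inner \<Rightarrow> real"
  assumes "GDERIV f a :> D"
  shows "((\<lambda>t. f (a + t *\<^sub>R v)) has_real_derivative inner D v) (at 0)"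
proof -
  have line: "((\<lambda>t. a + t *\<^sub>R v) has_derivative (\<lambda>t. t *\<^sub>R v)) (at 0)"
    by (auto intro!: derivative_eq_intros)
  have "(f has_derivative (\<lambda>h. inner h D)) (at (a + 0 *\<^sub>R v))"
    using assms by (simp add: gderiv_def)
  from has_derivative_compose[OF line this] show ?thesis
    by (simp add: has_field_derivative_def inner_commute mult_commute_abs)
qed

lemma DERIV_pos_eventually_at_right_less:
  fixes \<phi> :: "real \<Rightarrow> real"
  assumes "DERIV \<phi> 0 :> c" and "0 < c"
  shows "\<forall>\<^sub>F t in at_right 0. \<phi> 0 < \<phi> t"
  using DERIV_pos_inc_right[OF assms] by (auto simp: eventually_at_right_field)

lemma eventually_at_right_line_in_open:
  fixes b :: "'a::real_normed_vector"
  assumes "open \<Gamma>" and "b \<in> \<Gamma>"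
  shows "\<forall>\<^sub>F t in at_right 0. b + t *\<^sub>R v \<in> \<Gamma>"
proof -
  have "((\<lambda>t. b + t *\<^sub>R v) \<longlongrightarrow> b + 0 *\<^sub>R v) (at_right 0)"
    by (intro tendsto_intros)
  then show ?thesis
    using assms by (simp add: topological_tendstoD)
qed

lemma gderiv_orthogonal_if_constant_on_segment:
  fixes f :: "'a::real_inner \<Rightarrow> real"
  assumes "GDERIV f b :> D"
    and const: "\<And>r. 0 \<le> r \<Longrightarrow> r \<le> 1 \<Longrightarrow> f (b + r *\<^sub>R (a - b)) = f b"
  shows "inner D (a - b) = 0"
proof -
  define \<phi> where "\<phi> t = f (b + t *\<^sub>R (a - b))" for t
  have "((\<lambda>t. (\<phi> t - \<phi> 0) / (t - 0)) \<longlongrightarrow> inner D (a - b)) (at 0)"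
    using gderiv_along_line[OF assms(1)] unfolding has_field_derivative_iff \<phi>_def .
  then have "((\<lambda>t. (\<phi> t - \<phi> 0) / (t - 0)) \<longlongrightarrow> inner D (a - b)) (at_right 0)"
    by (rule filterlim_at_split[THEN iffD1, THEN conjunct2])
  moreover have "\<forall>\<^sub>F t in at_right 0. (\<phi> t - \<phi> 0) / (t - 0) = 0"
    by (rule eventually_mono[OF eventually_at_right_real[of 0 1]]) (simp_all add: \<phi>_def const)
  ultimately have "((\<lambda>_. 0) \<longlongrightarrow> inner D (a - b)) (at_right (0::real))"
    by (rule Lim_transform_eventually)
  then show ?thesis
    using tendsto_const_iff trivial_limit_at_right_real by metis
qed

lemma quasiconvex_on_gderiv_nonpos:
  fixes h :: "'a::real_inner \<Rightarrow> real"
  assumes qc: "quasiconvex_on \<Gamma> h" and "GDERIV h a :> D"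
    and ab: "a \<in> \<Gamma>" "b \<in> \<Gamma>" and "h b \<le> h a"
  shows "inner D (b - a) \<le> 0"
proof (rule ccontr)
  assume "\<not> ?thesis"
  then have "0 < inner D (b - a)"
    by simp
  from DERIV_pos_eventually_at_right_less[OF gderiv_along_line[OF assms(2)] this]
  have "\<forall>\<^sub>F t in at_right 0. h a < h (a + t *\<^sub>R (b - a))"
    unfolding scale_zero_left add_0_right .
  then have "\<forall>\<^sub>F t in at_right 0. h a < h (a + t *\<^sub>R (b - a)) \<and> t \<in> {0<..<1}"
    using eventually_at_right_real[OF zero_less_one] by eventually_elim auto
  then obtain t where "h a < h (a + t *\<^sub>R (b - a))" "0 < t" "t < 1"
    using eventually_happens'[OF trivial_limit_at_right_real] by auto
  moreover have "h (a + t *\<^sub>R (b - a)) \<le> max (h a) (h b)"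
    using qc ab \<open>0 < t\<close> \<open>t < 1\<close> unfolding quasiconvex_on_def by simp
  ultimately show False
    using \<open>h b \<le> h a\<close> by linarith
qed

lemma quasiconvex_on_gderiv_neg:
  fixes h :: "'a::real_inner \<Rightarrow> real"
  assumes "open \<Gamma>" and qc: "quasiconvex_on \<Gamma> h" and dh: "GDERIV h a :> D" and "D \<noteq> 0"
    and "isCont h b" and ab: "a \<in> \<Gamma>" "b \<in> \<Gamma>" and "h b < h a"
  shows "inner D (b - a) < 0"
proof -
  have "((\<lambda>t. b + t *\<^sub>R D) \<longlongrightarrow> b + 0 *\<^sub>R D) (at_right 0)"
    by (intro tendsto_intros)
  then have "((\<lambda>t. h (b + t *\<^sub>R D)) \<longlongrightarrow> h b) (at_right 0)"
    using isCont_tendsto_compose[OF \<open>isCont h b\<close>] by simp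
  then have "\<forall>\<^sub>F t in at_right 0. h (b + t *\<^sub>R D) < h a"
    using \<open>h b < h a\<close> by (rule order_tendstoD(2))
  then have "\<forall>\<^sub>F t in at_right 0. h (b + t *\<^sub>R D) < h a \<and> b + t *\<^sub>R D \<in> \<Gamma> \<and> 0 < t"
    using eventually_at_right_line_in_open[OF \<open>open \<Gamma>\<close> \<open>b \<in> \<Gamma>\<close>, of D]
      eventually_at_right_less[of 0]
    by eventually_elim auto
  then obtain t where t: "h (b + t *\<^sub>R D) < h a" "b + t *\<^sub>R D \<in> \<Gamma>" "0 < t"
    using eventually_happens'[OF trivial_limit_at_right_real] by auto
  then have "inner D (b + t *\<^sub>R D - a) \<le> 0"
    using quasiconvex_on_gderiv_nonpos[OF qc dh \<open>a \<in> \<Gamma>\<close>] by simp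
  moreover have "inner D (b + t *\<^sub>R D - a) = inner D (b - a) + t * (norm D)\<^sup>2"
    by (simp add: inner_diff_right inner_add_right power2_norm_eq_inner)
  moreover have "0 < t * (norm D)\<^sup>2"
    using \<open>0 < t\<close> \<open>D \<noteq> 0\<close> by simp
  ultimately show ?thesis
    by linarith
qed

lemma quasiconvex_on_constant_on_segment:
  fixes f :: "'a::real_inner \<Rightarrow> real"
  assumes "open \<Gamma>" "convex \<Gamma>" and qc: "quasiconvex_on \<Gamma> f" and "continuous_on \<Gamma> f"
    and df: "GDERIV f a :> D" "D \<noteq> 0" and ab: "a \<in> \<Gamma>" "b \<in> \<Gamma>"
    and "f b = f a" and "0 \<le> inner D (b - a)" and r: "0 \<le> r" "r \<le> 1"
  shows "f (a + r *\<^sub>R (b - a)) = f a"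
proof (rule antisym)
  show "f (a + r *\<^sub>R (b - a)) \<le> f a"
    using qc ab r \<open>f b = f a\<close> unfolding quasiconvex_on_def by fastforce
  have "a + r *\<^sub>R (b - a) = (1 - r) *\<^sub>R a + r *\<^sub>R b"
    by (simp add: algebra_simps)
  then have y: "a + r *\<^sub>R (b - a) \<in> \<Gamma>"
    using convexD[OF \<open>convex \<Gamma>\<close> ab] r by simp
  have "inner D (a + r *\<^sub>R (b - a) - a) \<ge> 0"
    using r \<open>0 \<le> inner D (b - a)\<close> by simp
  then show "f a \<le> f (a + r *\<^sub>R (b - a))"
    using quasiconvex_on_gderiv_neg[OF \<open>open \<Gamma>\<close> qc df _ ab(1) y] y \<open>continuous_on \<Gamma> f\<close> \<open>open \<Gamma>\<close>
    by (metis continuous_on_eq_continuous_at not_le)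
qed

lemma quasiconvex_on_critical_on_level_segment:
  fixes f :: "'a::real_inner \<Rightarrow> real"
  assumes "open \<Gamma>" and qc: "quasiconvex_on \<Gamma> f"
    and db: "GDERIV f b :> 0" and dy: "GDERIV f y :> e"
    and ab: "a \<in> \<Gamma>" "b \<in> \<Gamma>" and "f a \<le> f b"
    and r: "0 < r" "r \<le> 1" and y: "y = a + r *\<^sub>R (b - a)" and "f y = f b"
  shows "e = 0"
proof (rule ccontr)
  assume "e \<noteq> 0"
  \<comment> \<open>Moving b to \<open>b + t *\<^sub>R v\<close> moves y to \<open>y + t *\<^sub>R e\<close>, where f rises above
    both f b and \<open>f (b + t *\<^sub>R v)\<close> for small t > 0, contradicting quasiconvexity.\<close>
  define v where "v = (1 / r) *\<^sub>R e"
  have "DERIV (\<lambda>t. f (y + t *\<^sub>R e) - f (b + t *\<^sub>R v)) 0 :> inner e e - inner 0 v"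
    by (intro DERIV_diff gderiv_along_line dy db)
  from DERIV_pos_eventually_at_right_less[OF this]
  have "\<forall>\<^sub>F t in at_right 0. f (b + t *\<^sub>R v) < f (y + t *\<^sub>R e)"
    using \<open>e \<noteq> 0\<close> \<open>f y = f b\<close> by simp
  moreover have "\<forall>\<^sub>F t in at_right 0. f b < f (y + t *\<^sub>R e)"
    using DERIV_pos_eventually_at_right_less[OF gderiv_along_line[OF dy]] \<open>e \<noteq> 0\<close> \<open>f y = f b\<close>
    by simp
  moreover note eventually_at_right_line_in_open[OF \<open>open \<Gamma>\<close> \<open>b \<in> \<Gamma>\<close>, of v]
  ultimately have "\<forall>\<^sub>F t in at_right 0.
      f (b + t *\<^sub>R v) < f (y + t *\<^sub>R e) \<and> f b < f (y + t *\<^sub>R e) \<and> b + t *\<^sub>R v \<in> \<Gamma>"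
    by eventually_elim auto
  then obtain t where t: "f (b + t *\<^sub>R v) < f (y + t *\<^sub>R e)" "f b < f (y + t *\<^sub>R e)"
      "b + t *\<^sub>R v \<in> \<Gamma>"
    using eventually_happens'[OF trivial_limit_at_right_real] by auto
  have "a + r *\<^sub>R (b + t *\<^sub>R v - a) = y + t *\<^sub>R e"
    using r by (simp add: v_def y algebra_simps)
  then have "f (y + t *\<^sub>R e) \<le> max (f a) (f (b + t *\<^sub>R v))"
    using qc ab(1) t(3) r unfolding quasiconvex_on_def by (metis less_imp_le)
  then show False
    using t \<open>f a \<le> f b\<close> by linarith
qed

lemma quasiconvex_on_gderiv_nonzero_on_level_segment:
  fixes f :: "'a::real_inner \<Rightarrow> real"
  assumes "open \<Gamma>" "convex \<Gamma>" and qc: "quasiconvex_on \<Gamma> f"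
    and df: "\<forall>z\<in>\<Gamma>. GDERIV f z :> df z" and "isCont df a" "df a \<noteq> 0"
    and ab: "a \<in> \<Gamma>" "b \<in> \<Gamma>"
    and const: "\<And>r. 0 \<le> r \<Longrightarrow> r \<le> 1 \<Longrightarrow> f (a + r *\<^sub>R (b - a)) = f a"
  shows "df b \<noteq> 0"
proof
  assume "df b = 0"
  define y where "y n = a + inverse (real (Suc n)) *\<^sub>R (b - a)" for n
  have "df (y n) = 0" for n
  proof -
    define r where "r = inverse (real (Suc n))"
    have r: "0 < r" "r \<le> 1"
      by (auto simp: r_def inverse_le_1_iff)
    have "y n = (1 - r) *\<^sub>R a + r *\<^sub>R b"
      by (simp add: y_def r_def algebra_simps)
    then have "y n \<in> \<Gamma>"
      using convexD[OF \<open>convex \<Gamma>\<close> ab] r by simp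
    then have dy: "GDERIV f (y n) :> df (y n)"
      using df by blast
    have db: "GDERIV f b :> 0"
      using df \<open>b \<in> \<Gamma>\<close> \<open>df b = 0\<close> by metis
    have "f a \<le> f b" "f (y n) = f b"
      using const[of 1] const[of r] r by (simp_all add: y_def r_def)
    then show ?thesis
      using quasiconvex_on_critical_on_level_segment[OF \<open>open \<Gamma>\<close> qc db dy ab _ r]
      by (simp add: y_def r_def)
  qed
  moreover have "y \<longlonglongrightarrow> a + 0 *\<^sub>R (b - a)"
    unfolding y_def by (intro tendsto_intros LIMSEQ_inverse_real_of_nat)
  then have "(\<lambda>n. df (y n)) \<longlonglongrightarrow> df a"
    using isCont_tendsto_compose[OF \<open>isCont df a\<close>] by simp
  ultimately show False
    using \<open>df a \<noteq> 0\<close> by (simp add: LIMSEQ_const_iff)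
qed

locale quasiconvex_kkt_point =
  fixes \<Gamma> X :: "'a::real_inner set"
    and f :: "'a \<Rightarrow> real" and df :: "'a \<Rightarrow> 'a"
    and g :: "nat \<Rightarrow> 'a \<Rightarrow> real" and dg :: "nat \<Rightarrow> 'a \<Rightarrow> 'a"
    and m :: nat and xbar :: 'a and lam :: "nat \<Rightarrow> real"
    and S Sbar :: "'a set" and Itil :: "nat set" and X1 :: "'a set"
  assumes Gamma: "open \<Gamma>" "convex \<Gamma>"
    and X: "X \<subseteq> \<Gamma>" "convex X"
    and S_def: "S = {x \<in> X. \<forall>i\<in>{1..m}. g i x \<le> 0}"
    and Sbar_def: "Sbar = {x \<in> S. \<forall>y\<in>S. f x \<le> f y}"
    and xbar: "xbar \<in> Sbar"
    and f_C1: "\<forall>x\<in>\<Gamma>. GDERIV f x :> df x" "continuous_on \<Gamma> df"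
    and f_qc: "quasiconvex_on \<Gamma> f"
    and g_act: "\<forall>i\<in>{1..m}. g i xbar = 0 \<longrightarrow>
                 (\<forall>x\<in>\<Gamma>. GDERIV (g i) x :> dg i x) \<and> quasiconvex_on \<Gamma> (g i)"
    and df_nz: "df xbar \<noteq> 0"
    and GMFCQ: "\<exists>y\<in>neg_polar (normal_cone X xbar).
                  \<forall>i\<in>{1..m}. g i xbar = 0 \<longrightarrow> inner (dg i xbar) y < 0"
    and KKT: "\<forall>i\<in>{1..m}. lam i \<ge> 0 \<and> lam i * g i xbar = 0"
             "\<forall>x\<in>X. inner (df xbar + (\<Sum>i\<in>{i\<in>{1..m}. g i xbar = 0}. lam i *\<^sub>R dg i xbar))
                          (x - xbar) \<ge> 0"
    and Itil_def: "Itil = {i\<in>{1..m}. g i xbar = 0 \<and> lam i > 0}"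
    and X1_def: "X1 = {x \<in> X. (\<forall>i\<in>Itil. g i x = 0) \<and> (\<forall>i\<in>{1..m} - Itil. g i x \<le> 0)}"
begin

abbreviation active :: "nat set" where
  "active \<equiv> {i\<in>{1..m}. g i xbar = 0}"

lemma S_subset_Gamma: "S \<subseteq> \<Gamma>"
  using S_def X by auto

lemma xbar_in_S: "xbar \<in> S" and xbar_minimal: "y \<in> S \<Longrightarrow> f xbar \<le> f y"
  using xbar Sbar_def by auto

lemma xbar_in_Gamma: "xbar \<in> \<Gamma>"
  using xbar_in_S S_subset_Gamma by auto

lemma solution_value:
  assumes "x \<in> Sbar"
  shows "f x = f xbar"
proof -
  have "x \<in> S" "f x \<le> f xbar"
    using assms xbar_in_S unfolding Sbar_def by auto
  then show ?thesis
    using xbar_minimal by (simp add: antisym)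
qed

lemma f_continuous_on: "continuous_on \<Gamma> f"
  using f_C1(1) by (metis continuous_at_imp_continuous_on gderiv_def has_derivative_continuous)

lemma active_gradient_nonzero:
  assumes "i \<in> active"
  shows "dg i xbar \<noteq> 0"
proof -
  obtain y where "\<forall>i\<in>{1..m}. g i xbar = 0 \<longrightarrow> inner (dg i xbar) y < 0"
    using GMFCQ by blast
  then show ?thesis
    using assms by fastforce
qed

lemma kkt_inner:
  "x \<in> X \<Longrightarrow> 0 \<le> inner (df xbar) (x - xbar) + (\<Sum>i\<in>active. lam i * inner (dg i xbar) (x - xbar))"
  using KKT(2) by (simp add: inner_add_left inner_sum_left)

lemma multiplier_term_nonpos:
  assumes "i \<in> active" and "x \<in> S"
  shows "lam i * inner (dg i xbar) (x - xbar) \<le> 0"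
proof -
  have "inner (dg i xbar) (x - xbar) \<le> 0"
    using assms g_act S_subset_Gamma xbar_in_Gamma
    by (intro quasiconvex_on_gderiv_nonpos[of \<Gamma> "g i"]) (auto simp: S_def)
  then show ?thesis
    using assms KKT(1) by (simp add: mult_nonneg_nonpos)
qed

lemma multiplier_sum_nonpos:
  "x \<in> S \<Longrightarrow> (\<Sum>i\<in>active. lam i * inner (dg i xbar) (x - xbar)) \<le> 0"
  using multiplier_term_nonpos by (rule sum_nonpos)

lemma gradient_nonneg_on_S:
  assumes "x \<in> S"
  shows "0 \<le> inner (df xbar) (x - xbar)"
proof -
  have "x \<in> X"
    using assms S_def by auto
  then show ?thesis
    using kkt_inner multiplier_sum_nonpos[OF assms] by fastforce
qed

lemma X1_subset_S: "X1 \<subseteq> S"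
  using X1_def S_def by auto

lemma gradient_orthogonal_on_solutions:
  assumes "x \<in> Sbar"
  shows "inner (df xbar) (x - xbar) = 0"
proof -
  have "x \<in> \<Gamma>" "x \<in> S"
    using assms Sbar_def S_subset_Gamma by auto
  then have "inner (df xbar) (x - xbar) \<le> 0"
    using quasiconvex_on_gderiv_nonpos[OF f_qc _ xbar_in_Gamma] f_C1(1) xbar_in_Gamma
      solution_value[OF assms] by simp
  then show ?thesis
    using gradient_nonneg_on_S[OF \<open>x \<in> S\<close>] by simp
qed


lemma solutions_subset_X1: "Sbar \<subseteq> X1"
proof
  fix x assume x: "x \<in> Sbar"
  then have "x \<in> S" "x \<in> \<Gamma>"
    using Sbar_def S_subset_Gamma by auto
  have "x \<in> X"
    using \<open>x \<in> S\<close> S_def by auto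
  then have "(\<Sum>i\<in>active. lam i * inner (dg i xbar) (x - xbar)) = 0"
    using kkt_inner gradient_orthogonal_on_solutions[OF x] multiplier_sum_nonpos[OF \<open>x \<in> S\<close>]
    by fastforce
  then have "\<forall>i\<in>active. - (lam i * inner (dg i xbar) (x - xbar)) = 0"
  proof (intro sum_nonneg_eq_0_iff[THEN iffD1])
    show "0 \<le> - (lam i * inner (dg i xbar) (x - xbar))" if "i \<in> active" for i
      using multiplier_term_nonpos[OF that \<open>x \<in> S\<close>] by simp
  qed (simp_all add: sum_negf)
  then have terms: "lam i * inner (dg i xbar) (x - xbar) = 0" if "i \<in> active" for i
    using that by simp
  have "g i x = 0" if i: "i \<in> Itil" for i
  proof (rule ccontr)
    assume "g i x \<noteq> 0"
    moreover have "g i x \<le> 0" "g i xbar = 0"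
      using i \<open>x \<in> S\<close> by (auto simp: Itil_def S_def)
    ultimately have "g i x < g i xbar"
      by simp
    moreover have "\<forall>z\<in>\<Gamma>. GDERIV (g i) z :> dg i z" "quasiconvex_on \<Gamma> (g i)"
      using i g_act by (auto simp: Itil_def)
    moreover have "isCont (g i) x"
      using calculation(2) \<open>x \<in> \<Gamma>\<close> by (metis gderiv_def has_derivative_continuous)
    ultimately have "inner (dg i xbar) (x - xbar) < 0"
      using quasiconvex_on_gderiv_neg[OF Gamma(1)] active_gradient_nonzero[of i] i
        xbar_in_Gamma \<open>x \<in> \<Gamma>\<close> by (auto simp: Itil_def)
    then show False
      using terms[of i] i by (auto simp: Itil_def)
  qed
  then show "x \<in> X1"
    using \<open>x \<in> S\<close> by (auto simp: X1_def S_def)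
qed

lemma solution_segment:
  assumes "x \<in> Sbar" and "0 \<le> r" "r \<le> 1"
  shows "f (xbar + r *\<^sub>R (x - xbar)) = f xbar"
proof (rule quasiconvex_on_constant_on_segment[OF Gamma f_qc f_continuous_on _ df_nz xbar_in_Gamma])
  show "GDERIV f xbar :> df xbar"
    using f_C1(1) xbar_in_Gamma by blast
  show "x \<in> \<Gamma>"
    using assms(1) Sbar_def S_subset_Gamma by auto
qed (use assms solution_value gradient_orthogonal_on_solutions in auto)

lemma solution_gradient_nonzero: "x \<in> Sbar \<Longrightarrow> df x \<noteq> 0"
  using quasiconvex_on_gderiv_nonzero_on_level_segment[OF Gamma f_qc f_C1(1) _ df_nz xbar_in_Gamma]
    continuous_on_eq_continuous_at[OF Gamma(1)] f_C1(2) xbar_in_Gamma Sbar_def S_subset_Gamma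
    solution_segment
  by blast

lemma solution_gradient_orthogonal:
  assumes "x \<in> Sbar"
  shows "inner (df x) (xbar - x) = 0"
proof (rule gderiv_orthogonal_if_constant_on_segment)
  show "GDERIV f x :> df x"
    using assms f_C1(1) Sbar_def S_subset_Gamma by auto
  fix r :: real assume "0 \<le> r" "r \<le> 1"
  have "x + r *\<^sub>R (xbar - x) = xbar + (1 - r) *\<^sub>R (x - xbar)"
    by (simp add: algebra_simps)
  then show "f (x + r *\<^sub>R (xbar - x)) = f x"
    using solution_segment[OF assms, of "1 - r"] solution_value[OF assms] \<open>0 \<le> r\<close> \<open>r \<le> 1\<close>
    by simp
qed

lemma mem_solutions_if_gradient:
  assumes "x \<in> X1" and "df x \<noteq> 0" and "0 \<le> inner (df x) (xbar - x)"
  shows "x \<in> Sbar"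
proof -
  have "x \<in> S" "x \<in> \<Gamma>"
    using assms(1) X1_subset_S S_subset_Gamma by auto
  have "\<not> f xbar < f x"
  proof
    assume "f xbar < f x"
    then have "inner (df x) (xbar - x) < 0"
      using quasiconvex_on_gderiv_neg[OF Gamma(1) f_qc _ \<open>df x \<noteq> 0\<close> _ \<open>x \<in> \<Gamma>\<close> xbar_in_Gamma]
        f_C1(1) f_continuous_on Gamma(1) xbar_in_Gamma \<open>x \<in> \<Gamma>\<close>
      by (metis continuous_on_eq_continuous_at)
    then show False
      using assms(3) by simp
  qed
  then show ?thesis
    using \<open>x \<in> S\<close> xbar_minimal Sbar_def by force
qed

lemma solutions_eq_if:
  assumes "\<And>x. x \<in> X1 \<Longrightarrow> df x \<noteq> 0 \<Longrightarrow> inner (df x) (xbar - x) = 0 \<Longrightarrow>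
      inner (df xbar) (x - xbar) = 0 \<Longrightarrow> P x"
    and "\<And>x. x \<in> X1 \<Longrightarrow> 0 \<le> inner (df xbar) (x - xbar) \<Longrightarrow> P x \<Longrightarrow>
      df x \<noteq> 0 \<and> 0 \<le> inner (df x) (xbar - x)"
  shows "Sbar = {x \<in> X1. P x}"
proof (intro set_eqI iffI)
  fix x assume "x \<in> Sbar"
  then show "x \<in> {x \<in> X1. P x}"
    using assms(1) solutions_subset_X1 solution_gradient_nonzero solution_gradient_orthogonal
      gradient_orthogonal_on_solutions by blast
next
  fix x assume "x \<in> {x \<in> X1. P x}"
  then show "x \<in> Sbar"
    using assms(2) X1_subset_S gradient_nonneg_on_S mem_solutions_if_gradient by blast
qed

end

theorem theorem5:
  fixes \<Gamma> X :: "(real^'n) set"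
    and f :: "real^'n \<Rightarrow> real" and df :: "real^'n \<Rightarrow> real^'n"
    and g :: "nat \<Rightarrow> real^'n \<Rightarrow> real" and dg :: "nat \<Rightarrow> real^'n \<Rightarrow> real^'n"
    and m :: nat and xbar :: "real^'n" and lam :: "nat \<Rightarrow> real"
    and S Sbar I :: "(real^'n) set" and Itil :: "nat set" and X1 :: "(real^'n) set"
  assumes Gamma: "open \<Gamma>" "convex \<Gamma>"
    and X: "X \<subseteq> \<Gamma>" "convex X"
    and S_def: "S = {x \<in> X. \<forall>i\<in>{1..m}. g i x \<le> 0}"
    and Sbar_def: "Sbar = {x \<in> S. \<forall>y\<in>S. f x \<le> f y}"
    and xbar: "xbar \<in> Sbar"
    and f_C1: "\<forall>x\<in>\<Gamma>. GDERIV f x :> df x" "continuous_on \<Gamma> df"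
    and f_qc: "quasiconvex_on \<Gamma> f"
    and g_act: "\<forall>i\<in>{1..m}. g i xbar = 0 \<longrightarrow>
                 (\<forall>x\<in>\<Gamma>. GDERIV (g i) x :> dg i x) \<and> quasiconvex_on \<Gamma> (g i)"
    and g_inact: "\<forall>i\<in>{1..m}. g i xbar \<noteq> 0 \<longrightarrow> isCont (g i) xbar"
    and df_nz: "df xbar \<noteq> 0"
    and GMFCQ: "\<exists>y\<in>neg_polar (normal_cone X xbar).
                  \<forall>i\<in>{1..m}. g i xbar = 0 \<longrightarrow> inner (dg i xbar) y < 0"
    and KKT: "\<forall>i\<in>{1..m}. lam i \<ge> 0 \<and> lam i * g i xbar = 0"
             "\<forall>x\<in>X. inner (df xbar + (\<Sum>i\<in>{i\<in>{1..m}. g i xbar = 0}. lam i *\<^sub>R dg i xbar))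
                          (x - xbar) \<ge> 0"
    and Itil_def: "Itil = {i\<in>{1..m}. g i xbar = 0 \<and> lam i > 0}"
    and X1_def: "X1 = {x \<in> X. (\<forall>i\<in>Itil. g i x = 0) \<and> (\<forall>i\<in>{1..m} - Itil. g i x \<le> 0)}"
  shows "Sbar = {x \<in> X1. inner (df x) (xbar - x) = 0 \<and> df x \<noteq> 0} \<and>
         Sbar = {x \<in> X1. inner (df x) (xbar - x) \<ge> 0 \<and> df x \<noteq> 0} \<and>
         Sbar = {x \<in> X1. inner (df x) (xbar - x) = inner (df xbar) (x - xbar) \<and> df x \<noteq> 0} \<and>
         Sbar = {x \<in> X1. inner (df x) (xbar - x) \<ge> inner (df xbar) (x - xbar) \<and> df x \<noteq> 0} \<and>
         Sbar = {x \<in> X1. inner (df x) (xbar - x) = inner (df xbar) (x - xbar)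
                          \<and> inner (df xbar) (x - xbar) = 0 \<and> df x \<noteq> 0}"
proof -
  interpret P: quasiconvex_kkt_point \<Gamma> X f df g dg m xbar lam S Sbar Itil X1
    by unfold_locales (fact Gamma X S_def Sbar_def xbar f_C1 f_qc g_act df_nz GMFCQ KKT
        Itil_def X1_def)+
  show ?thesis
    by (intro conjI P.solutions_eq_if) auto
qed

end
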